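(* Let $A=\mathbb C_w[x,x^{-1},y,y^{-1}]$. For each of the following six choices of elements $x',y'\in A$ and $w'(s,t)\in A$ ($s,t\in\mathbb Z$): (1) $x'=y$, $y'=x$, $w'(s,t)=w(t,s)^{-1}$; (2) $x'=x^{-1}$, $y'=y$, $w'(s,t)=w(1-s,t)^{-1}$; (3) $x'=x^{-1}$, $y'=x^{-1}y$, $w'(s,t)=w(1-s-t,t)^{-1}$; (4) $x'=x$, $y'=y^{-1}$, $w'(s,t)=w(s,1-t)^{-1}$; (5) $x'=x^{-1}$, $y'=y^{-1}$, $w'(s,t)=w(1-s,1-t)$; (6) $x'=y^{-1}x$, $y'=y^{-1}$, $w'(s,t)=w(s,1-s-t)^{-1}$; the elements $x',y',w'(s,t)$ satisfy the defining relations of $A$ with $(x,y,w)$ replaced by $(x',y',w')$, and the assignment $x\mapsto x'$, $y\mapsto y'$, $w(s,t)\mapsto w'(s,t)$ defines an involutive algebra isomorphism.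
   Context: Let $(w(s,t))_{s,t\in\mathbb Z}$ be commuting invertible variables. $\mathbb C_w[x,x^{-1},y,y^{-1}]$ is the associative unital $\mathbb C$-algebra generated by $x,x^{-1},y,y^{-1}$ and the $w(s,t)^{\pm1}$ subject to $x^{-1}x=xx^{-1}=1$, $y^{-1}y=yy^{-1}=1$, $yx=w(1,1)xy$, $x\,w(s,t)=w(s+1,t)\,x$, $y\,w(s,t)=w(s,t+1)\,y$ for all $s,t\in\mathbb Z$. *)

theory Defs
  imports Complex_Main
begin

text \<open>Generators of A: x, x^-1, y, y^-1, w(s,t), w(s,t)^-1.\<close>
datatype gen = X | Xi | Y | Yi | W int int | Wi int int

datatype aexp = Gen gen | Sc complex | Plus aexp aexp | Times aexp aexp

inductive defrel :: "aexp \<Rightarrow> aexp \<Rightarrow> bool" where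
  r_xxi: "defrel (Times (Gen X) (Gen Xi)) (Sc 1)"
| r_xix: "defrel (Times (Gen Xi) (Gen X)) (Sc 1)"
| r_yyi: "defrel (Times (Gen Y) (Gen Yi)) (Sc 1)"
| r_yiy: "defrel (Times (Gen Yi) (Gen Y)) (Sc 1)"
| r_wwi: "defrel (Times (Gen (W s t)) (Gen (Wi s t))) (Sc 1)"
| r_wiw: "defrel (Times (Gen (Wi s t)) (Gen (W s t))) (Sc 1)"
| r_wcomm: "defrel (Times (Gen (W s t)) (Gen (W s' t'))) (Times (Gen (W s' t')) (Gen (W s t)))"
| r_yx: "defrel (Times (Gen Y) (Gen X)) (Times (Gen (W 1 1)) (Times (Gen X) (Gen Y)))"
| r_xw: "defrel (Times (Gen X) (Gen (W s t))) (Times (Gen (W (s + 1) t)) (Gen X))"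
| r_yw: "defrel (Times (Gen Y) (Gen (W s t))) (Times (Gen (W s (t + 1))) (Gen Y))"

text \<open>Equality in A: the least congruence on expressions containing the axioms of
  unital associative C-algebras (scalars central) and the defining relations.
  The quotient of aexp by aeq is exactly A.\<close>
inductive aeq :: "aexp \<Rightarrow> aexp \<Rightarrow> bool" where
  refl: "aeq a a"
| sym: "aeq a b \<Longrightarrow> aeq b a"
| trans: "aeq a b \<Longrightarrow> aeq b c \<Longrightarrow> aeq a c"
| plus_cong: "aeq a a' \<Longrightarrow> aeq b b' \<Longrightarrow> aeq (Plus a b) (Plus a' b')"
| times_cong: "aeq a a' \<Longrightarrow> aeq b b' \<Longrightarrow> aeq (Times a b) (Times a' b')"
| rel: "defrel a b \<Longrightarrow> aeq a b"
| plus_assoc: "aeq (Plus a (Plus b c)) (Plus (Plus a b) c)"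
| plus_comm: "aeq (Plus a b) (Plus b a)"
| plus_zero: "aeq (Plus (Sc 0) a) a"
| plus_neg: "aeq (Plus a (Times (Sc (-1)) a)) (Sc 0)"
| times_assoc: "aeq (Times a (Times b c)) (Times (Times a b) c)"
| times_one_l: "aeq (Times (Sc 1) a) a"
| times_one_r: "aeq (Times a (Sc 1)) a"
| distrib_l: "aeq (Times a (Plus b c)) (Plus (Times a b) (Times a c))"
| distrib_r: "aeq (Times (Plus a b) c) (Plus (Times a c) (Times b c))"
| sc_plus: "aeq (Plus (Sc c) (Sc d)) (Sc (c + d))"
| sc_times: "aeq (Times (Sc c) (Sc d)) (Sc (c * d))"
| sc_central: "aeq (Times (Sc c) a) (Times a (Sc c))"

primrec subst :: "(gen \<Rightarrow> aexp) \<Rightarrow> aexp \<Rightarrow> aexp" where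
  "subst f (Gen g) = f g"
| "subst f (Sc c) = Sc c"
| "subst f (Plus a b) = Plus (subst f a) (subst f b)"
| "subst f (Times a b) = Times (subst f a) (subst f b)"

fun img :: "nat \<Rightarrow> gen \<Rightarrow> aexp" where
  "img (Suc 0) X = Gen Y"
| "img (Suc 0) Xi = Gen Yi"
| "img (Suc 0) Y = Gen X"
| "img (Suc 0) Yi = Gen Xi"
| "img (Suc 0) (W s t) = Gen (Wi t s)"
| "img (Suc 0) (Wi s t) = Gen (W t s)"
| "img (Suc (Suc 0)) X = Gen Xi"
| "img (Suc (Suc 0)) Xi = Gen X"
| "img (Suc (Suc 0)) Y = Gen Y"
| "img (Suc (Suc 0)) Yi = Gen Yi"
| "img (Suc (Suc 0)) (W s t) = Gen (Wi (1 - s) t)"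
| "img (Suc (Suc 0)) (Wi s t) = Gen (W (1 - s) t)"
| "img (Suc (Suc (Suc 0))) X = Gen Xi"
| "img (Suc (Suc (Suc 0))) Xi = Gen X"
| "img (Suc (Suc (Suc 0))) Y = Times (Gen Xi) (Gen Y)"
| "img (Suc (Suc (Suc 0))) Yi = Times (Gen Yi) (Gen X)"
| "img (Suc (Suc (Suc 0))) (W s t) = Gen (Wi (1 - s - t) t)"
| "img (Suc (Suc (Suc 0))) (Wi s t) = Gen (W (1 - s - t) t)"
| "img (Suc (Suc (Suc (Suc 0)))) X = Gen X"
| "img (Suc (Suc (Suc (Suc 0)))) Xi = Gen Xi"
| "img (Suc (Suc (Suc (Suc 0)))) Y = Gen Yi"
| "img (Suc (Suc (Suc (Suc 0)))) Yi = Gen Y"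
| "img (Suc (Suc (Suc (Suc 0)))) (W s t) = Gen (Wi s (1 - t))"
| "img (Suc (Suc (Suc (Suc 0)))) (Wi s t) = Gen (W s (1 - t))"
| "img (Suc (Suc (Suc (Suc (Suc 0))))) X = Gen Xi"
| "img (Suc (Suc (Suc (Suc (Suc 0))))) Xi = Gen X"
| "img (Suc (Suc (Suc (Suc (Suc 0))))) Y = Gen Yi"
| "img (Suc (Suc (Suc (Suc (Suc 0))))) Yi = Gen Y"
| "img (Suc (Suc (Suc (Suc (Suc 0))))) (W s t) = Gen (W (1 - s) (1 - t))"
| "img (Suc (Suc (Suc (Suc (Suc 0))))) (Wi s t) = Gen (Wi (1 - s) (1 - t))"
| "img (Suc (Suc (Suc (Suc (Suc (Suc 0)))))) X = Times (Gen Yi) (Gen X)"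
| "img (Suc (Suc (Suc (Suc (Suc (Suc 0)))))) Xi = Times (Gen Xi) (Gen Y)"
| "img (Suc (Suc (Suc (Suc (Suc (Suc 0)))))) Y = Gen Yi"
| "img (Suc (Suc (Suc (Suc (Suc (Suc 0)))))) Yi = Gen Y"
| "img (Suc (Suc (Suc (Suc (Suc (Suc 0)))))) (W s t) = Gen (Wi s (1 - s - t))"
| "img (Suc (Suc (Suc (Suc (Suc (Suc 0)))))) (Wi s t) = Gen (W s (1 - s - t))"
| "img _ g = Gen g"

end

theory Submission
  imports Defs
begin

text \<open>Once the images are checked to satisfy the
  defining relations, the substitution descends to an endomorphism of A; checking that it maps
  the image of every generator back to that generator makes it an involution, hence bijective.
  Both checks are word computations in the monoid of monomials of A, done by rewriting every
  word into the normal form (monomial in the w) \<cdot> (power of x) \<cdot> (power of y).\<close>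

lemma subst_respects_aeq:
  assumes "\<And>l r. defrel l r \<Longrightarrow> aeq (subst f l) (subst f r)" and "aeq a b"
  shows "aeq (subst f a) (subst f b)"
  using assms(2) by (induction rule: aeq.induct) (auto intro: aeq.intros assms(1))

lemma subst_subst: "subst f (subst g a) = subst (subst f \<circ> g) a"
  by (induction a) simp_all

lemma subst_aeq_self:
  assumes "\<And>g. aeq (h g) (Gen g)"
  shows "aeq (subst h a) a"
  by (induction a) (auto intro: aeq.intros assms)

lemma intertwines_inverse:
  fixes a :: "'a::monoid_mult"
  assumes "a * a' = 1" "a' * a = 1" "a * b = c * a"
  shows "b * a' = a' * c"
proof -
  have "b * a' = (a' * a) * b * a'" using assms(2) by simp
  also have "\<dots> = a' * (a * b) * a'" by (simp add: mult.assoc)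
  also have "\<dots> = a' * c * (a * a')" using assms(3) by (simp add: mult.assoc)
  finally show ?thesis using assms(1) by simp
qed

lemma intertwines_inverses:
  fixes a :: "'a::monoid_mult"
  assumes "b * b' = 1" "c' * c = 1" "a * b = c * a"
  shows "a * b' = c' * a"
proof -
  have "a * b' = (c' * c) * a * b'" using assms(2) by simp
  also have "\<dots> = c' * (c * a) * b'" by (simp add: mult.assoc)
  also have "\<dots> = c' * (a * b) * b'" using assms(3) by simp
  also have "\<dots> = c' * a * (b * b')" by (simp add: mult.assoc)
  finally show ?thesis using assms(1) by simp
qed

lemma mult_eq_extend: "(a::'a::monoid_mult) * b = c \<Longrightarrow> a * (b * z) = c * z"
  by (metis mult.assoc)

lemma aeq_equivp: "equivp aeq"
  by (rule equivpI) (auto simp: reflp_def symp_def transp_def intro: aeq.intros)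

quotient_type A = aexp / aeq by (rule aeq_equivp)

instantiation A :: monoid_mult
begin

lift_definition times_A :: "A \<Rightarrow> A \<Rightarrow> A" is Times by (rule aeq.times_cong)

lift_definition one_A :: A is "Sc 1" .

instance proof
  fix a b c :: A
  show "a * b * c = a * (b * c)" by transfer (rule aeq.sym, rule aeq.times_assoc)
  show "1 * a = a" by transfer (rule aeq.times_one_l)
  show "a * 1 = a" by transfer (rule aeq.times_one_r)
qed

end

lift_definition A_gen :: "gen \<Rightarrow> A" is Gen .

lemma abs_A_Times: "abs_A (Times a b) = abs_A a * abs_A b"
  by (simp add: times_A.abs_eq)

lemma abs_A_Gen: "abs_A (Gen g) = A_gen g"
  by (simp add: A_gen.abs_eq)

lemma abs_A_one: "abs_A (Sc 1) = 1"
  by (simp add: one_A.abs_eq)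

lemmas abs_A_simps = abs_A_Times abs_A_Gen abs_A_one

lemma abs_A_defrel: "defrel a b \<Longrightarrow> abs_A a = abs_A b"
  by (simp add: A.abs_eq_iff aeq.rel)

abbreviation "x \<equiv> A_gen X"
abbreviation "xi \<equiv> A_gen Xi"
abbreviation "y \<equiv> A_gen Y"
abbreviation "yi \<equiv> A_gen Yi"
abbreviation "w s t \<equiv> A_gen (W s t)"
abbreviation "wi s t \<equiv> A_gen (Wi s t)"

lemma x_xi_cancel: "x * xi = 1"
  using abs_A_defrel[OF defrel.r_xxi] by (simp add: abs_A_simps)

lemma xi_x_cancel: "xi * x = 1"
  using abs_A_defrel[OF defrel.r_xix] by (simp add: abs_A_simps)

lemma y_yi_cancel: "y * yi = 1"
  using abs_A_defrel[OF defrel.r_yyi] by (simp add: abs_A_simps)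

lemma yi_y_cancel: "yi * y = 1"
  using abs_A_defrel[OF defrel.r_yiy] by (simp add: abs_A_simps)

lemma w_wi_cancel: "w s t * wi s t = 1"
  using abs_A_defrel[OF defrel.r_wwi] by (simp add: abs_A_simps)

lemma wi_w_cancel: "wi s t * w s t = 1"
  using abs_A_defrel[OF defrel.r_wiw] by (simp add: abs_A_simps)

lemma w_w_comm: "w s t * w s' t' = w s' t' * w s t"
  using abs_A_defrel[OF defrel.r_wcomm] by (simp add: abs_A_simps)

lemma y_x_comm: "y * x = w 1 1 * (x * y)"
  using abs_A_defrel[OF defrel.r_yx] by (simp add: abs_A_simps)

lemma x_w_comm: "x * w s t = w (s + 1) t * x"
  using abs_A_defrel[OF defrel.r_xw] by (simp add: abs_A_simps)

lemma y_w_comm: "y * w s t = w s (t + 1) * y"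
  using abs_A_defrel[OF defrel.r_yw] by (simp add: abs_A_simps)

lemma xi_w_comm: "xi * w s t = w (s - 1) t * xi"
  using intertwines_inverse[OF x_xi_cancel xi_x_cancel x_w_comm[of "s - 1" t]] by simp

lemma yi_w_comm: "yi * w s t = w s (t - 1) * yi"
  using intertwines_inverse[OF y_yi_cancel yi_y_cancel y_w_comm[of s "t - 1"]] by simp

lemma x_wi_comm: "x * wi s t = wi (s + 1) t * x"
  by (rule intertwines_inverses[OF w_wi_cancel wi_w_cancel x_w_comm])

lemma y_wi_comm: "y * wi s t = wi s (t + 1) * y"
  by (rule intertwines_inverses[OF w_wi_cancel wi_w_cancel y_w_comm])

lemma xi_wi_comm: "xi * wi s t = wi (s - 1) t * xi"
  by (rule intertwines_inverses[OF w_wi_cancel wi_w_cancel xi_w_comm])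

lemma yi_wi_comm: "yi * wi s t = wi s (t - 1) * yi"
  by (rule intertwines_inverses[OF w_wi_cancel wi_w_cancel yi_w_comm])

lemma w_wi_comm: "w s t * wi s' t' = wi s' t' * w s t"
  by (rule intertwines_inverses[OF w_wi_cancel wi_w_cancel w_w_comm])

lemma wi_wi_comm: "wi s t * wi s' t' = wi s' t' * wi s t"
  by (rule intertwines_inverses[OF w_wi_cancel wi_w_cancel w_wi_comm[symmetric]])

lemma y_xi_comm: "y * xi = wi 0 1 * (xi * y)"
proof -
  have "x * y = wi 1 1 * (y * x)"
    by (simp add: y_x_comm wi_w_cancel flip: mult.assoc)
  then have "y * xi = xi * (wi 1 1 * y)"
    by (intro intertwines_inverse[OF x_xi_cancel xi_x_cancel]) (simp add: mult.assoc)
  then show ?thesis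
    by (simp add: xi_wi_comm[THEN mult_eq_extend] mult.assoc)
qed

lemma yi_x_comm: "yi * x = wi 1 0 * (x * yi)"
proof -
  have "x * yi = yi * (w 1 1 * x)"
    by (intro intertwines_inverse[OF y_yi_cancel yi_y_cancel]) (simp add: y_x_comm mult.assoc)
  also have "\<dots> = w 1 0 * (yi * x)"
    by (simp add: yi_w_comm[THEN mult_eq_extend] mult.assoc)
  finally show ?thesis
    by (simp add: wi_w_cancel flip: mult.assoc)
qed

lemma yi_xi_comm: "yi * xi = w 0 0 * (xi * yi)"
proof -
  have "xi * yi = yi * (wi 0 1 * xi)"
    by (intro intertwines_inverse[OF y_yi_cancel yi_y_cancel]) (simp add: y_xi_comm mult.assoc)
  also have "\<dots> = wi 0 0 * (yi * xi)"
    by (simp add: yi_wi_comm[THEN mult_eq_extend] mult.assoc)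
  finally show ?thesis
    by (simp add: w_wi_cancel flip: mult.assoc)
qed

lemmas A_cancel_rules =
  x_xi_cancel xi_x_cancel y_yi_cancel yi_y_cancel w_wi_cancel wi_w_cancel

lemmas A_comm_rules =
  w_w_comm w_wi_comm wi_wi_comm
  x_w_comm x_wi_comm xi_w_comm xi_wi_comm y_w_comm y_wi_comm yi_w_comm yi_wi_comm
  y_x_comm y_xi_comm yi_x_comm yi_xi_comm

text \<open>The rules are also needed in front of an arbitrary tail, since simp keeps products
  associated to the right; the permutative rules for the w are applied as ordered rewriting.\<close>
lemmas A_normal_form_simps =
  A_cancel_rules A_cancel_rules[THEN mult_eq_extend, simplified]
  A_comm_rules A_comm_rules[THEN mult_eq_extend, simplified mult.assoc]
  mult.assoc

lemma img_respects_defrel: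
  assumes "k \<in> {1..6}" and "defrel l r"
  shows "aeq (subst (img k) l) (subst (img k) r)"
proof -
  have "k \<in> {1, 2, 3, 4, 5, 6}" using assms(1) by auto
  then have "abs_A (subst (img k) l) = abs_A (subst (img k) r)"
    using assms(2)
    by (auto elim!: defrel.cases simp: numeral_eq_Suc abs_A_simps A_normal_form_simps)
  then show ?thesis by (simp add: A.abs_eq_iff)
qed

lemma img_img_Gen:
  assumes "k \<in> {1..6}"
  shows "aeq (subst (img k) (img k g)) (Gen g)"
proof -
  have "k \<in> {1, 2, 3, 4, 5, 6}" using assms by auto
  then have "abs_A (subst (img k) (img k g)) = abs_A (Gen g)"
    by (cases g) (auto simp: numeral_eq_Suc abs_A_simps A_normal_form_simps)
  then show ?thesis by (simp add: A.abs_eq_iff)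
qed

lemma img_involutive:
  assumes "k \<in> {1..6}"
  shows "aeq (subst (img k) (subst (img k) a)) a"
  unfolding subst_subst by (rule subst_aeq_self) (simp add: img_img_Gen[OF assms])

theorem lemma1:
  fixes k :: nat
  assumes "k \<in> {1..6}"
  shows "(\<forall>l r. defrel l r \<longrightarrow> aeq (subst (img k) l) (subst (img k) r))
    \<and> (\<forall>a b. aeq a b \<longrightarrow> aeq (subst (img k) a) (subst (img k) b))
    \<and> (\<forall>a. aeq (subst (img k) (subst (img k) a)) a)
    \<and> (\<forall>a b. aeq (subst (img k) a) (subst (img k) b) \<longrightarrow> aeq a b)
    \<and> (\<forall>b. \<exists>a. aeq (subst (img k) a) b)"
proof -
  note hom = img_respects_defrel[OF assms]
  note invol = img_involutive[OF assms]
  have "aeq a b" if "aeq (subst (img k) a) (subst (img k) b)" for a b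
    using subst_respects_aeq[OF hom that] invol by (meson aeq.sym aeq.trans)
  then show ?thesis
    using hom subst_respects_aeq[OF hom] invol by blast
qed

end
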